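(* Let $\Bbbk$ be an algebraically closed field of characteristic $0$, let $P=\Bbbk[x_1,\dots,x_n]$ be a quadratic Poisson algebra, let $\phi$ be a graded Poisson automorphism of $P$ and $\widetilde\phi$ the corresponding graded automorphism of $U(P)$. Suppose $\phi|_{P_1}$ has distinct eigenvalues $\lambda_1,\dots,\lambda_m$ with multiplicities $c_1,\dots,c_m$ respectively. Then $\widetilde\phi|_{U(P)_1}$ has eigenvalues $\lambda_1,\dots,\lambda_m$ with multiplicities $2c_1,\dots,2c_m$ respectively.
   Context: $P$ has the standard grading and is quadratic: $\{P_1,P_1\}\subseteq P_2$. $U(P)$ is the $\Bbbk$-algebra generated by $x_1,\dots,x_n,y_1,\dots,y_n$ (all of degree $1$, so $U(P)_1=\bigoplus_i\Bbbk x_i\oplus\bigoplus_i\Bbbk y_i$) with relations $[x_i,x_j]=0$, $[y_i,y_j]=\sum_k\frac{\partial\{x_i,x_j\}}{\partial x_k}y_k$, $[y_i,x_j]=\{x_i,x_j\}$. The induced automorphism is $\widetilde\phi(x_i)=\phi(x_i)$, $\widetilde\phi(y_i)=\sum_j\frac{\partial\phi(x_i)}{\partial x_j}y_j$. *)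

theory Defs
  imports "HOL-Library.Poly_Mapping" "Jordan_Normal_Form.Jordan_Normal_Form"
begin

(* Commutative polynomials over 'k: finitely supported maps from monomials
 (exponent vectors, nat =>0 nat) to coefficients. Variable x_i is indexed by i
 (0-based; the paper's x_1..x_n are our x_0..x_(n-1)). *)

type_synonym 'k mpoly = "(nat \<Rightarrow>\<^sub>0 nat) \<Rightarrow>\<^sub>0 'k"

definition mvar :: "nat \<Rightarrow> 'k::comm_ring_1 mpoly" where
  "mvar i = Poly_Mapping.single (Poly_Mapping.single i 1) 1"

definition mconst :: "'k::comm_ring_1 \<Rightarrow> 'k mpoly" where
  "mconst c = Poly_Mapping.single 0 c"

definition polyring :: "nat \<Rightarrow> 'k::comm_ring_1 mpoly set" where
  "polyring n = {p. \<forall>mo \<in> Poly_Mapping.keys p. \<forall>i \<in> Poly_Mapping.keys mo. i < n}"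

definition mdeg :: "(nat \<Rightarrow>\<^sub>0 nat) \<Rightarrow> nat" where
  "mdeg mo = (\<Sum>i \<in> Poly_Mapping.keys mo. Poly_Mapping.lookup mo i)"

definition homog :: "nat \<Rightarrow> 'k::comm_ring_1 mpoly \<Rightarrow> bool" where
  "homog d p = (\<forall>mo \<in> Poly_Mapping.keys p. mdeg mo = d)"

definition pdiff :: "nat \<Rightarrow> 'k::comm_ring_1 mpoly \<Rightarrow> 'k mpoly" where
  "pdiff k p = (\<Sum>mo \<in> Poly_Mapping.keys p.
     Poly_Mapping.single (mo - Poly_Mapping.single k 1)
       (of_nat (Poly_Mapping.lookup mo k) * Poly_Mapping.lookup p mo))"

definition poisson_bracket :: "nat \<Rightarrow> ('k::comm_ring_1 mpoly \<Rightarrow> 'k mpoly \<Rightarrow> 'k mpoly) \<Rightarrow> bool" where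
  "poisson_bracket n br \<longleftrightarrow>
    (\<forall>p\<in>polyring n. \<forall>q\<in>polyring n. br p q \<in> polyring n) \<and>
    (\<forall>p\<in>polyring n. \<forall>q\<in>polyring n. \<forall>r\<in>polyring n. br (p + q) r = br p r + br q r) \<and>
    (\<forall>c. \<forall>p\<in>polyring n. \<forall>q\<in>polyring n. br (mconst c * p) q = mconst c * br p q) \<and>
    (\<forall>p\<in>polyring n. \<forall>q\<in>polyring n. br p q = - br q p) \<and>
    (\<forall>p\<in>polyring n. \<forall>q\<in>polyring n. \<forall>r\<in>polyring n. br p (q * r) = br p q * r + q * br p r) \<and>
    (\<forall>p\<in>polyring n. \<forall>q\<in>polyring n. \<forall>r\<in>polyring n.
        br p (br q r) + br q (br r p) + br r (br p q) = 0)"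

definition quadratic_poisson :: "nat \<Rightarrow> ('k::comm_ring_1 mpoly \<Rightarrow> 'k mpoly \<Rightarrow> 'k mpoly) \<Rightarrow> bool" where
  "quadratic_poisson n br \<longleftrightarrow> poisson_bracket n br \<and>
     (\<forall>p\<in>polyring n. \<forall>q\<in>polyring n. homog 1 p \<longrightarrow> homog 1 q \<longrightarrow> homog 2 (br p q))"

definition graded_poisson_aut :: "nat \<Rightarrow> ('k::comm_ring_1 mpoly \<Rightarrow> 'k mpoly \<Rightarrow> 'k mpoly)
     \<Rightarrow> ('k mpoly \<Rightarrow> 'k mpoly) \<Rightarrow> bool" where
  "graded_poisson_aut n br \<phi> \<longleftrightarrow>
    bij_betw \<phi> (polyring n) (polyring n) \<and>
    (\<forall>p\<in>polyring n. \<forall>q\<in>polyring n. \<phi> (p + q) = \<phi> p + \<phi> q) \<and>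
    (\<forall>p\<in>polyring n. \<forall>q\<in>polyring n. \<phi> (p * q) = \<phi> p * \<phi> q) \<and>
    (\<forall>c. \<forall>p\<in>polyring n. \<phi> (mconst c * p) = mconst c * \<phi> p) \<and>
    \<phi> 1 = 1 \<and>
    (\<forall>p\<in>polyring n. \<forall>q\<in>polyring n. \<phi> (br p q) = br (\<phi> p) (\<phi> q)) \<and>
    (\<forall>d. \<forall>p\<in>polyring n. homog d p \<longrightarrow> homog d (\<phi> p))"

(* Matrix of \<phi> restricted to P_1 w.r.t. the basis x_0..x_(n-1):
  column i holds the coordinates of \<phi>(x_i). *)
definition mat_P1 :: "nat \<Rightarrow> ('k::comm_ring_1 mpoly \<Rightarrow> 'k mpoly) \<Rightarrow> 'k mat" where
  "mat_P1 n \<phi> = mat n n (\<lambda>(j, i). Poly_Mapping.lookup (\<phi> (mvar i)) (Poly_Mapping.single j 1))"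

(* U(P)_1 has basis x_0..x_(n-1), y_0..y_(n-1) (indices 0..n-1 and n..2n-1);
  since all defining relations of U(P) are homogeneous of degree 2, U(P)_1 is the free
  span of the generators. Matrix of the induced automorphism restricted to U(P)_1:
  \<phi>~(x_i) = \<phi>(x_i),  \<phi>~(y_i) = \<Sum>_j (\<partial>\<phi>(x_i)/\<partial>x_j) y_j
  (the derivative is a scalar, i.e. lies in P_0, since \<phi>(x_i) \<in> P_1). *)
definition mat_U1 :: "nat \<Rightarrow> ('k::comm_ring_1 mpoly \<Rightarrow> 'k mpoly) \<Rightarrow> 'k mat" where
  "mat_U1 n \<phi> = mat (2 * n) (2 * n) (\<lambda>(r, s).
     if s < n then
       (if r < n then Poly_Mapping.lookup (\<phi> (mvar s)) (Poly_Mapping.single r 1) else 0)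
     else
       (if n \<le> r then Poly_Mapping.lookup (pdiff (r - n) (\<phi> (mvar (s - n)))) 0 else 0))"

end

theory Submission imports Defs begin

(* The constant term of the partial derivative of p in x_k is the coefficient of x_k in p.
  Hence the coefficients of y_j in \<phi>~(y_i) are those of x_j in \<phi>(x_i), so the matrix of
  \<phi>~ on U(P)_1 is the block diagonal matrix diag(A, A), where A is the matrix of \<phi> on P_1,
  and its characteristic polynomial is the square of that of A.  This doubles every root
  multiplicity and keeps the set of roots. *)

lemma minus_single_eq_zero_iff:
  fixes mo :: "nat \<Rightarrow>\<^sub>0 nat"
  assumes "Poly_Mapping.lookup mo k \<noteq> 0"
  shows "mo - Poly_Mapping.single k 1 = 0 \<longleftrightarrow> mo = Poly_Mapping.single k 1"
proof
  assume "mo - Poly_Mapping.single k 1 = 0"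
  show "mo = Poly_Mapping.single k 1"
  proof (rule poly_mapping_eqI)
    fix i
    have "Poly_Mapping.lookup mo i - Poly_Mapping.lookup (Poly_Mapping.single k 1) i = 0"
      using \<open>mo - Poly_Mapping.single k 1 = 0\<close> by (metis lookup_minus lookup_zero)
    with assms show "Poly_Mapping.lookup mo i = Poly_Mapping.lookup (Poly_Mapping.single k 1) i"
      by (cases "i = k") (auto simp: lookup_single)
  qed
qed simp

lemma lookup_pdiff_zero:
  "Poly_Mapping.lookup (pdiff k p) 0 = Poly_Mapping.lookup p (Poly_Mapping.single k 1)"
proof -
  have "Poly_Mapping.lookup (pdiff k p) 0 =
      (\<Sum>mo \<in> Poly_Mapping.keys p. if mo - Poly_Mapping.single k 1 = 0
         then of_nat (Poly_Mapping.lookup mo k) * Poly_Mapping.lookup p mo else 0)"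
    unfolding pdiff_def by (simp add: lookup_sum lookup_single when_def)
  also have "\<dots> = (\<Sum>mo \<in> Poly_Mapping.keys p.
      if mo = Poly_Mapping.single k 1 then Poly_Mapping.lookup p mo else 0)"
  proof (intro sum.cong refl)
    fix mo :: "nat \<Rightarrow>\<^sub>0 nat"
    show "(if mo - Poly_Mapping.single k 1 = 0
          then of_nat (Poly_Mapping.lookup mo k) * Poly_Mapping.lookup p mo else 0) =
        (if mo = Poly_Mapping.single k 1 then Poly_Mapping.lookup p mo else 0)"
    proof (cases "Poly_Mapping.lookup mo k = 0")
      case True
      then show ?thesis by auto
    next
      case False
      then show ?thesis by (simp only: minus_single_eq_zero_iff[OF False]) simp
    qed
  qed
  also have "\<dots> = Poly_Mapping.lookup p (Poly_Mapping.single k 1)"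
    by (simp add: sum.delta in_keys_iff)
  finally show ?thesis .
qed

lemma mat_U1_eq_four_block_mat:
  "mat_U1 n \<phi> = four_block_mat (mat_P1 n \<phi>) (0\<^sub>m n n) (0\<^sub>m n n) (mat_P1 n \<phi>)"
  unfolding mat_U1_def mat_P1_def
  by (rule eq_matI) (auto simp: lookup_pdiff_zero)

lemma char_poly_four_block_diag:
  fixes A :: "'a::field mat"
  assumes A: "A \<in> carrier_mat n n" and B: "B \<in> carrier_mat m m"
  shows "char_poly (four_block_mat A (0\<^sub>m n m) (0\<^sub>m m n) B) = char_poly A * char_poly B"
proof -
  have "char_poly_matrix (four_block_mat A (0\<^sub>m n m) (0\<^sub>m m n) B) =
      four_block_mat (char_poly_matrix A) (0\<^sub>m n m) (0\<^sub>m m n) (char_poly_matrix B)"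
    using A B unfolding char_poly_matrix_def by (intro eq_matI) auto
  then show ?thesis
    using A B unfolding char_poly_def
    by (simp add: det_four_block_mat_upper_right_zero[of _ n _ m])
qed

lemma
  fixes A :: "'a::field mat"
  assumes A: "A \<in> carrier_mat n n"
  shows eigenvalue_four_block_diag_self:
      "eigenvalue (four_block_mat A (0\<^sub>m n n) (0\<^sub>m n n) A) a \<longleftrightarrow> eigenvalue A a"
    and order_char_poly_four_block_diag_self:
      "order a (char_poly (four_block_mat A (0\<^sub>m n n) (0\<^sub>m n n) A)) =
         2 * order a (char_poly A)"
proof -
  let ?D = "four_block_mat A (0\<^sub>m n n) (0\<^sub>m n n) A"
  have D: "?D \<in> carrier_mat (n + n) (n + n)"
    using A by simp
  have cp: "char_poly ?D = char_poly A * char_poly A"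
    using char_poly_four_block_diag[OF A A] .
  have "char_poly A \<noteq> 0"
    using degree_monic_char_poly[OF A] by auto
  then show "order a (char_poly ?D) = 2 * order a (char_poly A)"
    unfolding cp by (simp add: order_mult)
  show "eigenvalue ?D a \<longleftrightarrow> eigenvalue A a"
    unfolding eigenvalue_root_char_poly[OF D] eigenvalue_root_char_poly[OF A] cp by simp
qed

theorem lemma2p5:
  fixes n m :: nat
    and br :: "'k::{alg_closed_field, field_char_0} mpoly \<Rightarrow> 'k mpoly \<Rightarrow> 'k mpoly"
    and \<phi> :: "'k mpoly \<Rightarrow> 'k mpoly"
    and lam :: "nat \<Rightarrow> 'k" and c :: "nat \<Rightarrow> nat"
  assumes "quadratic_poisson n br"
    and "graded_poisson_aut n br \<phi>"
    and "inj_on lam {..<m}"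
    and "\<forall>x. eigenvalue (mat_P1 n \<phi>) x \<longleftrightarrow> x \<in> lam ` {..<m}"
    and "\<forall>i<m. order (lam i) (char_poly (mat_P1 n \<phi>)) = c i"
  shows "(\<forall>x. eigenvalue (mat_U1 n \<phi>) x \<longleftrightarrow> x \<in> lam ` {..<m}) \<and>
         (\<forall>i<m. order (lam i) (char_poly (mat_U1 n \<phi>)) = 2 * c i)"
proof -
  have A: "mat_P1 n \<phi> \<in> carrier_mat n n"
    unfolding mat_P1_def by simp
  show ?thesis
    using assms(4,5)
    by (simp add: mat_U1_eq_four_block_mat eigenvalue_four_block_diag_self[OF A]
        order_char_poly_four_block_diag_self[OF A])
qed

end
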